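(* Let $\mathcal{A}=M_2(\mathbb{F})$ be endowed with an involution $*$ of the first kind and let $f$ be a multilinear $*$-polynomial. Let $\mathcal{S}$, $\mathcal{K}$, $\mathcal{Z}$ denote the sets of symmetric, skew-symmetric and central (scalar) elements of $\mathcal{A}$. Suppose one of the following holds: (1) $*$ is the transpose involution and $\mathbb{F}=\mathbb{R}$; (2) $*$ is the symplectic involution $\begin{pmatrix}a&b\\c&d\end{pmatrix}^*=\begin{pmatrix}d&-b\\-c&a\end{pmatrix}$ and $\mathbb{F}$ is an arbitrary field. Then the linear span of the image $f(\mathcal{A})$ is one of the subspaces \[ 0,\ \mathcal{Z},\ \mathcal{K},\ [\mathcal{S},\mathcal{K}],\ \mathcal{S},\ \mathcal{Z}+\mathcal{K},\ [\mathcal{A},\mathcal{A}],\ \mathcal{A}. \]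
   Context: An involution of the first kind on an $\mathbb{F}$-algebra $\mathcal{A}$ is an $\mathbb{F}$-linear map $*$ with $(a^* )^*=a$ and $(ab)^*=b^*a^*$. For subsets $U,V\subseteq\mathcal{A}$, $[U,V]$ denotes the linear span of all commutators $[u,v]=uv-vu$ with $u\in U$, $v\in V$. A $*$-polynomial is an element of the free algebra $\mathbb{F}\langle Y;Z\rangle$ on symmetric variables $y_i$ ($y_i^*=y_i$) and skew-symmetric variables $z_j$ ($z_j^*=-z_j$); its image $f(\mathcal{A})$ is the set of its values when symmetric elements of $\mathcal{A}$ are substituted for the $y_i$ and skew-symmetric elements for the $z_j$. It is multilinear if each variable occurs exactly once in every monomial. *)

theory Defs
  imports "HOL-Analysis.Analysis"
begin

type_synonym 'a m2 = "'a ^ 2 ^ 2"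

definition msmult :: "'a::field \<Rightarrow> 'a m2 \<Rightarrow> 'a m2" where
  "msmult c A = (\<chi> i j. c * A $ i $ j)"

definition lspan :: "'a::field m2 set \<Rightarrow> 'a m2 set" where
  "lspan U = module.span msmult U"

definition mprod :: "'a::field m2 list \<Rightarrow> 'a m2" where
  "mprod xs = foldr (\<lambda>A B. A ** B) xs (mat 1)"

definition symplectic :: "'a::field m2 \<Rightarrow> 'a m2" where
  "symplectic A = (\<chi> i j. if i = j then A $ (if i = 1 then 2 else 1) $ (if i = 1 then 2 else 1)
                            else - A $ i $ j)"

definition sym_els :: "('a::field m2 \<Rightarrow> 'a m2) \<Rightarrow> 'a m2 set" where
  "sym_els star = {A. star A = A}"

definition skew_els :: "('a::field m2 \<Rightarrow> 'a m2) \<Rightarrow> 'a m2 set" where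
  "skew_els star = {A. star A = - A}"

definition central_els :: "'a::field m2 set" where
  "central_els = range (\<lambda>c. mat c)"

definition comm_span :: "'a::field m2 set \<Rightarrow> 'a m2 set \<Rightarrow> 'a m2 set" where
  "comm_span U V = lspan {u ** v - v ** u | u v. u \<in> U \<and> v \<in> V}"

definition set_plus_m :: "'a::field m2 set \<Rightarrow> 'a m2 set \<Rightarrow> 'a m2 set" where
  "set_plus_m U V = {u + v | u v. u \<in> U \<and> v \<in> V}"

text \<open>A multilinear *-polynomial in the variables indexed 0..n-1, where the indices in Y are
  symmetric variables y_i and the others skew-symmetric variables z_j, is
  f = sum over permutations s of {..<n} of  c s * x_(s 0) x_(s 1) ... x_(s (n-1)).\<close>
definition mpoly_eval :: "nat \<Rightarrow> ((nat \<Rightarrow> nat) \<Rightarrow> 'a::field) \<Rightarrow> (nat \<Rightarrow> 'a m2) \<Rightarrow> 'a m2" where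
  "mpoly_eval n c x = (\<Sum>s\<in>{s. s permutes {..<n}}. msmult (c s) (mprod (map (\<lambda>i. x (s i)) [0..<n])))"

definition star_admissible :: "('a::field m2 \<Rightarrow> 'a m2) \<Rightarrow> nat \<Rightarrow> nat set \<Rightarrow> (nat \<Rightarrow> 'a m2) \<Rightarrow> bool" where
  "star_admissible star n Y x \<longleftrightarrow>
     (\<forall>i<n. (i \<in> Y \<longrightarrow> x i \<in> sym_els star) \<and> (i \<notin> Y \<longrightarrow> x i \<in> skew_els star))"

definition star_image :: "('a::field m2 \<Rightarrow> 'a m2) \<Rightarrow> nat \<Rightarrow> nat set \<Rightarrow> ((nat \<Rightarrow> nat) \<Rightarrow> 'a) \<Rightarrow> 'a m2 set" where
  "star_image star n Y c = {mpoly_eval n c x | x. star_admissible star n Y x}"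

definition candidate_spaces :: "('a::field m2 \<Rightarrow> 'a m2) \<Rightarrow> 'a m2 set set" where
  "candidate_spaces star =
     {{0}, central_els, skew_els star, comm_span (sym_els star) (skew_els star), sym_els star,
      set_plus_m central_els (skew_els star), comm_span UNIV UNIV, UNIV}"

end

theory Submission
  imports Defs
begin

(* The span W of f(A) is a subspace invariant under every algebra automorphism of M_2(F) that
   commutes with *: such a map sends admissible substitutions to admissible ones and commutes
   with evaluating f.

   For the transpose over R (or any ordered field) the conjugations by orthogonal matrices are
   such automorphisms. They preserve the decomposition M_2 = Z + K + [S,K] into scalars,
   skew-symmetric and traceless symmetric matrices, the projections onto the summands are linear
   combinations of these conjugations, and the rotations act irreducibly on [S,K]. Hence W is the
   sum of those summands it meets, which gives exactly the eight listed spaces.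

   For the symplectic involution X* = adj X every inner automorphism commutes with *. Moreover W
   is graded for the grading deg e11 = deg e22 = 0, deg e12 = 1, deg e21 = -1, because * preserves
   this grading and f is multilinear; the grading replaces the diagonal torus action, which may be
   trivial over a small field. A graded subspace invariant under the elementary conjugations is
   0, Z, K = [A,A] or A. *)

interpretation m2: module "msmult :: 'a::field \<Rightarrow> 'a m2 \<Rightarrow> 'a m2"
  by unfold_locales (simp_all add: msmult_def vec_eq_iff algebra_simps)

lemma matrix_add_rdistrib:
  fixes A B :: "'a::semiring_1 ^ 'n ^ 'm" and C :: "'a ^ 'p ^ 'n"
  shows "(A + B) ** C = A ** C + B ** C"
  by (simp add: matrix_matrix_mult_def vec_eq_iff distrib_right sum.distrib)

lemmas m2_entry_simps =
  vec_eq_iff forall_2 matrix_matrix_mult_def sum_2 mat_def msmult_def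

definition mat2 :: "'a \<Rightarrow> 'a \<Rightarrow> 'a \<Rightarrow> 'a \<Rightarrow> 'a m2" where
  "mat2 a b c d = (\<chi> i j. if i = 1 then (if j = 1 then a else b) else (if j = 1 then c else d))"

lemma mat2_nth [simp]:
  "mat2 a b c d $ 1 $ 1 = a" "mat2 a b c d $ 1 $ 2 = b"
  "mat2 a b c d $ 2 $ 1 = c" "mat2 a b c d $ 2 $ 2 = d"
  by (simp_all add: mat2_def)

lemmas mat2_simps = m2_entry_simps mat2_def

lemma m2_module_homI:
  fixes \<phi> :: "'a::field m2 \<Rightarrow> 'a m2"
  assumes "\<And>X Y. \<phi> (X + Y) = \<phi> X + \<phi> Y" and "\<And>a X. \<phi> (msmult a X) = msmult a (\<phi> X)"
  shows "module_hom msmult msmult \<phi>"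
  using assms m2.module_axioms by (simp add: module_hom_iff)

lemma lspan_base: "X \<in> B \<Longrightarrow> X \<in> lspan B"
  unfolding lspan_def by (rule m2.span_base)

lemma lspan_zero: "0 \<in> lspan B"
  unfolding lspan_def by (rule m2.span_zero)

lemma lspan_add: "X \<in> lspan B \<Longrightarrow> Y \<in> lspan B \<Longrightarrow> X + Y \<in> lspan B"
  unfolding lspan_def by (rule m2.span_add)

lemma lspan_scale: "X \<in> lspan B \<Longrightarrow> msmult a X \<in> lspan B"
  unfolding lspan_def by (rule m2.span_scale)

lemma lspan_subset_subspace: "B \<subseteq> W \<Longrightarrow> m2.subspace W \<Longrightarrow> lspan B \<subseteq> W"
  unfolding lspan_def by (rule m2.span_minimal)

lemma subspace_lspan: "m2.subspace (lspan B)"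
  unfolding lspan_def by (rule m2.subspace_span)

lemma lspan_closed_under_module_hom:
  fixes \<phi> :: "'a::field m2 \<Rightarrow> 'a m2"
  assumes hom: "module_hom msmult msmult \<phi>" and base: "\<phi> ` B \<subseteq> lspan B"
  shows "\<phi> ` lspan B \<subseteq> lspan B"
proof -
  have "\<phi> ` lspan B = lspan (\<phi> ` B)"
    unfolding lspan_def by (rule module_hom.span_image[OF hom, symmetric])
  also have "\<dots> \<subseteq> lspan B"
    using base unfolding lspan_def by (metis m2.span_mono m2.span_span)
  finally show ?thesis .
qed

lemma mprod_Nil [simp]: "mprod [] = mat 1"
  by (simp add: mprod_def)

lemma mprod_Cons [simp]: "mprod (A # xs) = A ** mprod xs"
  by (simp add: mprod_def)

definition m2_alg_hom :: "('a::field m2 \<Rightarrow> 'a m2) \<Rightarrow> bool" where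
  "m2_alg_hom \<phi> \<longleftrightarrow> module_hom msmult msmult \<phi> \<and> \<phi> (mat 1) = mat 1 \<and>
     (\<forall>A B. \<phi> (A ** B) = \<phi> A ** \<phi> B)"

lemma mprod_alg_hom: "m2_alg_hom \<phi> \<Longrightarrow> \<phi> (mprod xs) = mprod (map \<phi> xs)"
  by (induction xs) (simp_all add: m2_alg_hom_def)

lemma mpoly_eval_alg_hom:
  assumes "m2_alg_hom \<phi>"
  shows "\<phi> (mpoly_eval n c x) = mpoly_eval n c (\<phi> \<circ> x)"
proof -
  interpret module_hom msmult msmult \<phi>
    using assms by (simp add: m2_alg_hom_def)
  show ?thesis
    by (simp add: mpoly_eval_def sum scale mprod_alg_hom[OF assms] o_def)
qed

definition star_invariant :: "('a::field m2 \<Rightarrow> 'a m2) \<Rightarrow> 'a m2 set \<Rightarrow> bool" where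
  "star_invariant star W \<longleftrightarrow>
     (\<forall>\<phi>. m2_alg_hom \<phi> \<and> (\<forall>X. star (\<phi> X) = \<phi> (star X)) \<longrightarrow> \<phi> ` W \<subseteq> W)"

lemma star_admissible_alg_hom:
  assumes "star_admissible star n Y x" "m2_alg_hom \<phi>" "\<And>X. star (\<phi> X) = \<phi> (star X)"
  shows "star_admissible star n Y (\<phi> \<circ> x)"
proof -
  interpret module_hom msmult msmult \<phi>
    using assms(2) by (simp add: m2_alg_hom_def)
  show ?thesis
    using assms(1) by (auto simp: star_admissible_def sym_els_def skew_els_def assms(3) neg)
qed

lemma star_invariant_lspan_star_image: "star_invariant star (lspan (star_image star n Y c))"
  unfolding star_invariant_def
proof (intro allI impI)
  fix \<phi> :: "'a m2 \<Rightarrow> 'a m2"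
  assume \<phi>: "m2_alg_hom \<phi> \<and> (\<forall>X. star (\<phi> X) = \<phi> (star X))"
  have "\<phi> ` star_image star n Y c \<subseteq> star_image star n Y c"
    using \<phi> by (auto simp: star_image_def mpoly_eval_alg_hom intro!: star_admissible_alg_hom)
  then show "\<phi> ` lspan (star_image star n Y c) \<subseteq> lspan (star_image star n Y c)"
    using \<phi> by (intro lspan_closed_under_module_hom) (auto simp: m2_alg_hom_def intro: lspan_base)
qed

lemma m2_alg_hom_conj:
  fixes P Q :: "'a::field m2"
  assumes "P ** Q = mat 1" "Q ** P = mat 1"
  shows "m2_alg_hom (\<lambda>X. P ** X ** Q)"
proof -
  have "P ** (A ** B) ** Q = (P ** A ** Q) ** (P ** B ** Q)" for A B
    by (simp add: matrix_mul_assoc assms(2) flip: matrix_mul_assoc[of _ Q P])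
  moreover have "module_hom msmult msmult (\<lambda>X. P ** X ** Q)"
    by (rule m2_module_homI) (simp_all add: m2_entry_simps algebra_simps sum_distrib_left)
  ultimately show ?thesis
    by (simp add: m2_alg_hom_def assms(1))
qed

lemma star_invariant_conj:
  fixes P Q :: "'a::field m2"
  assumes "star_invariant star W" "P ** Q = mat 1" "Q ** P = mat 1"
    "\<And>X. star (P ** X ** Q) = P ** star X ** Q" "X \<in> W"
  shows "P ** X ** Q \<in> W"
  using assms m2_alg_hom_conj[OF assms(2,3)] unfolding star_invariant_def by blast

definition grade_space :: "int \<Rightarrow> 'a::field m2 set" where
  "grade_space k =
     (if k = 0 then {X. X$1$2 = 0 \<and> X$2$1 = 0}
      else if k = 1 then {X. X$1$1 = 0 \<and> X$2$1 = 0 \<and> X$2$2 = 0}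
      else if k = -1 then {X. X$1$1 = 0 \<and> X$1$2 = 0 \<and> X$2$2 = 0}
      else {0})"

definition grade_proj :: "int \<Rightarrow> 'a::field m2 \<Rightarrow> 'a m2" where
  "grade_proj k X =
     (if k = 0 then mat2 (X$1$1) 0 0 (X$2$2)
      else if k = 1 then mat2 0 (X$1$2) 0 0
      else if k = -1 then mat2 0 0 (X$2$1) 0
      else 0)"

lemma grade_space_mult: "A \<in> grade_space a \<Longrightarrow> B \<in> grade_space b \<Longrightarrow> A ** B \<in> grade_space (a + b)"
  by (auto simp: grade_space_def m2_entry_simps split: if_splits)

lemma mat_1_in_grade_space: "mat 1 \<in> grade_space 0"
  by (simp add: grade_space_def mat_def)

lemma subspace_grade_space: "m2.subspace (grade_space k)"
  by (auto simp: m2.subspace_def grade_space_def m2_entry_simps)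

lemma mprod_in_grade_space:
  "(\<And>i. i \<in> set xs \<Longrightarrow> f i \<in> grade_space (d i)) \<Longrightarrow>
     mprod (map f xs) \<in> grade_space (sum_list (map d xs))"
  by (induction xs) (auto simp: mat_1_in_grade_space intro: grade_space_mult)

lemma mpoly_eval_in_grade_space:
  assumes "\<And>i. i < n \<Longrightarrow> x i \<in> grade_space (d i)"
  shows "mpoly_eval n c x \<in> grade_space (\<Sum>i<n. d i)"
  unfolding mpoly_eval_def
proof (intro m2.subspace_sum[OF subspace_grade_space] m2.subspace_scale[OF subspace_grade_space])
  fix s assume "s \<in> {s. s permutes {..<n}}"
  then have s: "s permutes {..<n}" by simp
  have "sum_list (map (\<lambda>i. d (s i)) [0..<n]) = (\<Sum>i<n. d i)"
    using sum.permute[OF s, of d]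
    by (simp add: sum_set_upt_conv_sum_list_nat[symmetric] atLeast0LessThan o_def)
  moreover have "mprod (map (\<lambda>i. x (s i)) [0..<n]) \<in> grade_space (sum_list (map (\<lambda>i. d (s i)) [0..<n]))"
    using assms permutes_in_image[OF s] by (intro mprod_in_grade_space) auto
  ultimately show "mprod (map (\<lambda>i. x (s i)) [0..<n]) \<in> grade_space (\<Sum>i<n. d i)"
    by simp
qed

lemma module_hom_grade_proj: "module_hom msmult msmult (grade_proj k)"
  by (rule m2_module_homI) (simp_all add: grade_proj_def mat2_simps)

lemma grade_proj_in_grade_space: "grade_proj k X \<in> grade_space k"
  by (auto simp: grade_proj_def grade_space_def)

lemma grade_proj_homogeneous: "X \<in> grade_space d \<Longrightarrow> grade_proj k X = (if k = d then X else 0)"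
  by (auto simp: grade_proj_def grade_space_def mat2_simps split: if_splits)

lemma sum_grade_proj: "grade_proj (-1) X + grade_proj 0 X + grade_proj 1 X = X"
  by (simp add: grade_proj_def mat2_simps)

lemma symplectic_grade_proj: "symplectic (grade_proj k X) = grade_proj k (symplectic X)"
  by (simp add: grade_proj_def symplectic_def mat2_simps)

lemma mprod_upd_add:
  fixes x :: "nat \<Rightarrow> 'a::field m2"
  assumes "distinct (map s xs)" "j \<in> s ` set xs"
  shows "mprod (map (\<lambda>i. (x(j := u + v)) (s i)) xs) =
           mprod (map (\<lambda>i. (x(j := u)) (s i)) xs) + mprod (map (\<lambda>i. (x(j := v)) (s i)) xs)"
  using assms
proof (induction xs)
  case (Cons a xs)
  show ?case
  proof (cases "s a = j")
    case True
    with Cons.prems have "j \<notin> s ` set xs"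
      by auto
    then have "map (\<lambda>i. (x(j := w)) (s i)) xs = map (\<lambda>i. x (s i)) xs" for w
      by (auto intro!: map_cong)
    then have "mprod (map (\<lambda>i. (x(j := w)) (s i)) (a # xs)) = w ** mprod (map (\<lambda>i. x (s i)) xs)"
      for w
      by (simp only: list.map mprod_Cons True fun_upd_same)
    then show ?thesis
      by (simp only: matrix_add_rdistrib)
  next
    case False
    with Cons show ?thesis
      by (simp add: matrix_add_ldistrib)
  qed
qed simp

lemma mpoly_eval_upd_add:
  fixes x :: "nat \<Rightarrow> 'a::field m2"
  assumes "j < n"
  shows "mpoly_eval n c (x(j := u + v)) = mpoly_eval n c (x(j := u)) + mpoly_eval n c (x(j := v))"
  unfolding mpoly_eval_def sum.distrib[symmetric]
proof (intro sum.cong refl)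
  fix s assume "s \<in> {s. s permutes {..<n}}"
  then have s: "s permutes {..<n}" by simp
  have "distinct (map s [0..<n])"
    using permutes_inj_on[OF s] by (simp add: distinct_map atLeast0LessThan)
  moreover have "j \<in> s ` set [0..<n]"
    using permutes_image[OF s] assms by (simp add: atLeast0LessThan)
  ultimately show "msmult (c s) (mprod (map (\<lambda>i. (x(j := u + v)) (s i)) [0..<n])) =
      msmult (c s) (mprod (map (\<lambda>i. (x(j := u)) (s i)) [0..<n])) +
      msmult (c s) (mprod (map (\<lambda>i. (x(j := v)) (s i)) [0..<n]))"
    by (simp only: mprod_upd_add m2.scale_right_distrib)
qed

lemma star_admissible_upd_grade_proj:
  assumes "star_admissible star n Y x" "\<And>k X. star (grade_proj k X) = grade_proj k (star X)"
  shows "star_admissible star n Y (x(m := grade_proj k (x m)))"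
  using assms module_hom.neg[OF module_hom_grade_proj]
  by (auto simp: star_admissible_def sym_els_def skew_els_def)

lemma grade_proj_mpoly_eval_mem_lspan:
  fixes star :: "'a::field m2 \<Rightarrow> 'a m2"
  assumes star: "\<And>k X. star (grade_proj k X) = grade_proj k (star X)"
    and x: "star_admissible star n Y x"
  shows "grade_proj k (mpoly_eval n c x) \<in> lspan (star_image star n Y c)"
proof -
  let ?W = "lspan (star_image star n Y c)"
  have reduce: "grade_proj k (mpoly_eval n c x) \<in> ?W"
    if "star_admissible star n Y x" "\<And>i. m \<le> i \<Longrightarrow> i < n \<Longrightarrow> x i \<in> grade_space (d i)"
    for m x d
    using that
  \<comment> \<open>Induction on the number of arguments not yet known to be homogeneous:
    multilinearity splits \<open>x m\<close> into its three homogeneous components.\<close>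
  proof (induction m arbitrary: x d)
    case 0
    then have "mpoly_eval n c x \<in> grade_space (\<Sum>i<n. d i)"
      by (intro mpoly_eval_in_grade_space) simp
    then have "grade_proj k (mpoly_eval n c x) \<in> {mpoly_eval n c x, 0}"
      by (simp add: grade_proj_homogeneous)
    moreover have "mpoly_eval n c x \<in> ?W"
      using "0.prems"(1) by (auto simp: star_image_def intro: lspan_base)
    ultimately show ?case
      using lspan_zero by auto
  next
    case (Suc m)
    show ?case
    proof (cases "m < n")
      case False
      then show ?thesis
        by (intro Suc.IH[OF Suc.prems(1), of d]) auto
    next
      case True
      define y where "y j = x(m := grade_proj j (x m))" for j
      have parts: "grade_proj k (mpoly_eval n c (y j)) \<in> ?W" for j
      proof (rule Suc.IH)
        show "star_admissible star n Y (y j)"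
          unfolding y_def by (rule star_admissible_upd_grade_proj[OF Suc.prems(1) star])
        show "y j i \<in> grade_space ((d(m := j)) i)" if "m \<le> i" "i < n" for i
          using Suc.prems(2)[of i] that grade_proj_in_grade_space
          by (cases "i = m") (auto simp: y_def)
      qed
      have "mpoly_eval n c x =
          mpoly_eval n c (x(m := grade_proj (-1) (x m) + grade_proj 0 (x m) + grade_proj 1 (x m)))"
        by (simp add: sum_grade_proj)
      also have "\<dots> = mpoly_eval n c (y (-1)) + mpoly_eval n c (y 0) + mpoly_eval n c (y 1)"
        unfolding y_def using True by (simp add: mpoly_eval_upd_add)
      finally show ?thesis
        using parts by (simp add: module_hom.add[OF module_hom_grade_proj] lspan_add)
    qed
  qed
  show ?thesis
    by (rule reduce[where m = n, OF x]) simp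
qed

definition graded :: "'a::field m2 set \<Rightarrow> bool" where
  "graded W \<longleftrightarrow> (\<forall>k. grade_proj k ` W \<subseteq> W)"

lemma graded_lspan_star_image:
  assumes "\<And>k X. star (grade_proj k X) = grade_proj k (star X)"
  shows "graded (lspan (star_image star n Y c))"
  unfolding graded_def
proof
  fix k
  have "grade_proj k ` star_image star n Y c \<subseteq> lspan (star_image star n Y c)"
    using grade_proj_mpoly_eval_mem_lspan[OF assms] by (auto simp: star_image_def)
  then show "grade_proj k ` lspan (star_image star n Y c) \<subseteq> lspan (star_image star n Y c)"
    by (intro lspan_closed_under_module_hom module_hom_grade_proj)
qed

lemma central_els_eq: "central_els = {X :: 'a::field m2. X$1$2 = 0 \<and> X$2$1 = 0 \<and> X$1$1 = X$2$2}"
proof (intro set_eqI iffI)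
  fix X :: "'a m2"
  assume "X \<in> {X. X$1$2 = 0 \<and> X$2$1 = 0 \<and> X$1$1 = X$2$2}"
  then have "X = mat (X$1$1)"
    by (auto simp: m2_entry_simps)
  then show "X \<in> central_els"
    unfolding central_els_def by blast
qed (auto simp: central_els_def mat_def)

lemma subspace_traceless: "m2.subspace {X :: 'a::field m2. X$1$1 + X$2$2 = 0}"
  by (auto simp: m2.subspace_def msmult_def; algebra)

lemma comm_span_UNIV: "comm_span UNIV UNIV = {X :: 'a::field m2. X$1$1 + X$2$2 = 0}"
proof
  have "(u ** v - v ** u)$1$1 + (u ** v - v ** u)$2$2 = 0" for u v :: "'a m2"
    by (simp add: matrix_matrix_mult_def sum_2 algebra_simps)
  then show "comm_span UNIV UNIV \<subseteq> {X :: 'a m2. X$1$1 + X$2$2 = 0}"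
    unfolding comm_span_def by (intro lspan_subset_subspace[OF _ subspace_traceless]) blast
next
  let ?G = "{u ** v - v ** u | u v. u \<in> (UNIV :: 'a m2 set) \<and> v \<in> UNIV}"
  have comm: "u ** v - v ** u \<in> lspan ?G" for u v
    by (rule lspan_base) blast
  show "{X :: 'a m2. X$1$1 + X$2$2 = 0} \<subseteq> comm_span UNIV UNIV"
  proof clarify
    fix X :: "'a m2"
    assume "X$1$1 + X$2$2 = 0"
    then have "X = msmult (X$1$1) (mat2 0 1 0 0 ** mat2 0 0 1 0 - mat2 0 0 1 0 ** mat2 0 1 0 0)
        + msmult (X$1$2) (mat2 1 0 0 0 ** mat2 0 1 0 0 - mat2 0 1 0 0 ** mat2 1 0 0 0)
        + msmult (X$2$1) (mat2 0 0 1 0 ** mat2 1 0 0 0 - mat2 1 0 0 0 ** mat2 0 0 1 0)"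
      by (simp add: mat2_simps eq_neg_iff_add_eq_0[symmetric])
    also have "\<dots> \<in> comm_span UNIV UNIV"
      unfolding comm_span_def by (intro lspan_add lspan_scale comm)
    finally show "X \<in> comm_span UNIV UNIV" .
  qed
qed

lemma sym_els_transpose: "sym_els transpose = {X :: 'a::field m2. X$1$2 = X$2$1}"
  by (auto simp: sym_els_def transpose_def m2_entry_simps)

lemma skew_els_transpose:
  "skew_els transpose = {X :: 'a::linordered_field m2. X$1$1 = 0 \<and> X$2$2 = 0 \<and> X$1$2 + X$2$1 = 0}"
  by (auto simp: skew_els_def transpose_def m2_entry_simps)

lemma set_plus_central_skew_transpose:
  "set_plus_m central_els (skew_els transpose) =
     {X :: 'a::linordered_field m2. X$1$1 = X$2$2 \<and> X$1$2 + X$2$1 = 0}"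
proof (intro set_eqI iffI)
  fix X :: "'a m2"
  assume X: "X \<in> {X. X$1$1 = X$2$2 \<and> X$1$2 + X$2$1 = 0}"
  then have "X = mat (X$1$1) + mat2 0 (X$1$2) (X$2$1) 0"
    by (auto simp: mat2_simps)
  moreover have "mat2 0 (X$1$2) (X$2$1) 0 \<in> skew_els transpose"
    using X by (simp add: skew_els_transpose)
  ultimately show "X \<in> set_plus_m central_els (skew_els transpose)"
    unfolding set_plus_m_def central_els_def by blast
qed (auto simp: set_plus_m_def central_els_eq skew_els_transpose)

lemma comm_span_sym_skew_transpose:
  "comm_span (sym_els transpose) (skew_els transpose) =
     {X :: 'a::linordered_field m2. X$1$1 + X$2$2 = 0 \<and> X$1$2 = X$2$1}"
proof
  show "comm_span (sym_els transpose) (skew_els transpose) \<subseteq>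
      {X :: 'a m2. X$1$1 + X$2$2 = 0 \<and> X$1$2 = X$2$1}"
    unfolding comm_span_def
    by (rule lspan_subset_subspace)
      (auto simp: m2.subspace_def sym_els_transpose skew_els_transpose m2_entry_simps
        algebra_simps eq_neg_iff_add_eq_0[symmetric])
next
  let ?G = "{u ** v - v ** u | u v. u \<in> sym_els transpose \<and> v \<in> (skew_els transpose :: 'a m2 set)}"
  let ?K = "mat2 0 1 (-1) 0 :: 'a m2"
  have comm: "u ** ?K - ?K ** u \<in> lspan ?G" if "u$1$2 = u$2$1" for u
    using that by (intro lspan_base) (fastforce simp: sym_els_transpose skew_els_transpose)
  show "{X :: 'a m2. X$1$1 + X$2$2 = 0 \<and> X$1$2 = X$2$1} \<subseteq>
      comm_span (sym_els transpose) (skew_els transpose)"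
  proof clarify
    fix X :: "'a m2"
    assume "X$1$1 + X$2$2 = 0" "X$1$2 = X$2$1"
    then have "X = msmult (X$1$2) (mat2 1 0 0 0 ** ?K - ?K ** mat2 1 0 0 0)
        + msmult (- X$1$1 / 2) (mat2 0 1 1 0 ** ?K - ?K ** mat2 0 1 1 0)"
      by (simp add: mat2_simps eq_neg_iff_add_eq_0[symmetric])
    also have "\<dots> \<in> comm_span (sym_els transpose) (skew_els transpose)"
      unfolding comm_span_def by (intro lspan_add lspan_scale comm) simp_all
    finally show "X \<in> comm_span (sym_els transpose) (skew_els transpose)" .
  qed
qed

text \<open>A matrix lies in \<open>zkp_space z k p\<close> iff its components in the decomposition
  \<open>M\<^sub>2 = \<Z> \<oplus> \<K> \<oplus> [\<S>,\<K>]\<close> for the transpose vanish wherever the corresponding flag is \<open>False\<close>.\<close>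
definition zkp_space :: "bool \<Rightarrow> bool \<Rightarrow> bool \<Rightarrow> 'a::field m2 set" where
  "zkp_space z k p =
     {X. (z \<or> X$1$1 + X$2$2 = 0) \<and> (k \<or> X$1$2 = X$2$1) \<and> (p \<or> X$1$1 = X$2$2 \<and> X$1$2 + X$2$1 = 0)}"

lemma zkp_space_mem_candidate_spaces:
  "zkp_space z k p \<in> candidate_spaces (transpose :: 'a::linordered_field m2 \<Rightarrow> 'a m2)"
proof -
  have "zkp_space False False False = ({0} :: 'a m2 set)"
    by (auto simp: zkp_space_def m2_entry_simps)
  moreover have "zkp_space True False False = (central_els :: 'a m2 set)"
    by (auto simp: zkp_space_def central_els_eq)
  moreover have "zkp_space False True False = (skew_els transpose :: 'a m2 set)"
    by (auto simp: zkp_space_def skew_els_transpose)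
  moreover have "zkp_space False False True = (comm_span (sym_els transpose) (skew_els transpose) :: 'a m2 set)"
    by (auto simp: zkp_space_def comm_span_sym_skew_transpose)
  moreover have "zkp_space True False True = (sym_els transpose :: 'a m2 set)"
    by (auto simp: zkp_space_def sym_els_transpose)
  moreover have "zkp_space True True False = (set_plus_m central_els (skew_els transpose) :: 'a m2 set)"
    by (auto simp: zkp_space_def set_plus_central_skew_transpose)
  moreover have "zkp_space False True True = (comm_span UNIV UNIV :: 'a m2 set)"
    by (auto simp: zkp_space_def comm_span_UNIV)
  moreover have "zkp_space True True True = (UNIV :: 'a m2 set)"
    by (auto simp: zkp_space_def)
  ultimately show ?thesis
    unfolding candidate_spaces_def by (cases z; cases k; cases p) (simp_all only: insert_iff simp_thms)
qed

lemma transpose_components_mem: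
  fixes W :: "'a::linordered_field m2 set"
  assumes W: "m2.subspace W" "star_invariant transpose W" and X: "X \<in> W"
  shows "mat2 (X$1$1 + X$2$2) 0 0 (X$1$1 + X$2$2) \<in> W"
    and "mat2 0 (X$1$2 - X$2$1) (X$2$1 - X$1$2) 0 \<in> W"
    and "mat2 (X$1$1 - X$2$2) (X$1$2 + X$2$1) (X$1$2 + X$2$1) (- (X$1$1 - X$2$2)) \<in> W"
proof -
  \<comment> \<open>Conjugation by the rotation \<open>J\<close> through \<open>\<pi>/2\<close> fixes \<open>\<Z>\<close> and \<open>\<K>\<close> and negates \<open>[\<S>,\<K>]\<close>;
    conjugation by the reflection \<open>R\<close> fixes \<open>\<Z>\<close> and negates \<open>\<K>\<close>.\<close>
  let ?J = "mat2 0 (-1) 1 0 :: 'a m2" and ?J' = "mat2 0 1 (-1) 0 :: 'a m2"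
  let ?R = "mat2 1 0 0 (-1) :: 'a m2"
  have conj_J: "?J ** A ** ?J' \<in> W" if "A \<in> W" for A
    by (rule star_invariant_conj[OF W(2) _ _ _ that]) (simp_all add: mat2_simps transpose_def)
  have conj_R: "?R ** A ** ?R \<in> W" if "A \<in> W" for A
    by (rule star_invariant_conj[OF W(2) _ _ _ that]) (simp_all add: mat2_simps transpose_def)
  define Y where "Y = X + ?J ** X ** ?J'"
  have Y: "Y \<in> W"
    unfolding Y_def by (intro m2.subspace_add[OF W(1)] X conj_J)
  have "mat2 (X$1$1 + X$2$2) 0 0 (X$1$1 + X$2$2) = msmult (1/2) (Y + ?R ** Y ** ?R)"
    by (simp add: Y_def mat2_simps)
  also have "\<dots> \<in> W"
    by (intro m2.subspace_scale[OF W(1)] m2.subspace_add[OF W(1)] Y conj_R)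
  finally show "mat2 (X$1$1 + X$2$2) 0 0 (X$1$1 + X$2$2) \<in> W" .
  have "mat2 0 (X$1$2 - X$2$1) (X$2$1 - X$1$2) 0 = msmult (1/2) (Y - ?R ** Y ** ?R)"
    by (simp add: Y_def mat2_simps)
  also have "\<dots> \<in> W"
    by (intro m2.subspace_scale[OF W(1)] m2.subspace_diff[OF W(1)] Y conj_R)
  finally show "mat2 0 (X$1$2 - X$2$1) (X$2$1 - X$1$2) 0 \<in> W" .
  have "mat2 (X$1$1 - X$2$2) (X$1$2 + X$2$1) (X$1$2 + X$2$1) (- (X$1$1 - X$2$2)) = X - ?J ** X ** ?J'"
    by (simp add: mat2_simps)
  also have "\<dots> \<in> W"
    by (intro m2.subspace_diff[OF W(1)] X conj_J)
  finally show "mat2 (X$1$1 - X$2$2) (X$1$2 + X$2$1) (X$1$2 + X$2$1) (- (X$1$1 - X$2$2)) \<in> W" .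
qed

lemma traceless_symmetric_basis_mem:
  fixes W :: "'a::linordered_field m2 set"
  assumes W: "m2.subspace W" "star_invariant transpose W"
    and P: "mat2 p q q (-p) \<in> W" and pq: "p \<noteq> 0 \<or> q \<noteq> 0"
  shows "mat2 1 0 0 (-1) \<in> W" and "mat2 0 1 1 0 \<in> W"
proof -
  \<comment> \<open>Conjugation by a multiple of the rotation through \<open>\<pi>/4\<close> turns \<open>(p, q)\<close> into \<open>(-q, p)\<close>.\<close>
  let ?G = "mat2 1 (-1) 1 1 :: 'a m2" and ?G' = "mat2 (1/2) (1/2) (-1/2) (1/2) :: 'a m2"
  have "?G ** mat2 p q q (-p) ** ?G' \<in> W"
    by (rule star_invariant_conj[OF W(2) _ _ _ P]) (simp_all add: mat2_simps transpose_def field_simps)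
  moreover have "?G ** mat2 p q q (-p) ** ?G' = mat2 (-q) p p q"
    by (simp add: mat2_simps field_simps)
  ultimately have P': "mat2 (-q) p p q \<in> W"
    by simp
  have d: "p * p + q * q \<noteq> 0"
    using pq by simp
  have "mat2 1 0 0 (-1) =
      msmult (1 / (p * p + q * q)) (msmult p (mat2 p q q (-p)) - msmult q (mat2 (-q) p p q))"
    using d by (simp add: mat2_simps field_simps)
  also have "\<dots> \<in> W"
    by (intro m2.subspace_scale[OF W(1)] m2.subspace_diff[OF W(1)] P P')
  finally show "mat2 1 0 0 (-1) \<in> W" .
  have "mat2 0 1 1 0 =
      msmult (1 / (p * p + q * q)) (msmult q (mat2 p q q (-p)) + msmult p (mat2 (-q) p p q))"
    using d by (simp add: mat2_simps field_simps)
  also have "\<dots> \<in> W"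
    by (intro m2.subspace_scale[OF W(1)] m2.subspace_add[OF W(1)] P P')
  finally show "mat2 0 1 1 0 \<in> W" .
qed

lemma star_invariant_transpose_eq_zkp_space:
  fixes W :: "'a::linordered_field m2 set"
  assumes W: "m2.subspace W" "star_invariant transpose W"
  shows "W = zkp_space (\<exists>X\<in>W. X$1$1 + X$2$2 \<noteq> 0) (\<exists>X\<in>W. X$1$2 \<noteq> X$2$1)
                       (\<exists>X\<in>W. X$1$1 \<noteq> X$2$2 \<or> X$1$2 + X$2$1 \<noteq> 0)"
    (is "W = zkp_space ?z ?k ?p")
proof
  show "W \<subseteq> zkp_space ?z ?k ?p"
    by (auto simp: zkp_space_def)
  have scaled_mem: "msmult a M \<in> W" if "a = 0 \<or> M \<in> W" for a M
    using that m2.subspace_0[OF W(1)] m2.subspace_scale[OF W(1)] by auto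
  have I: "mat2 1 0 0 1 \<in> W" if ?z
  proof -
    obtain X where X: "X \<in> W" "X$1$1 + X$2$2 \<noteq> 0"
      using \<open>?z\<close> by blast
    have "mat2 1 0 0 1 = msmult (1 / (X$1$1 + X$2$2)) (mat2 (X$1$1 + X$2$2) 0 0 (X$1$1 + X$2$2))"
      using X(2) by (simp add: mat2_simps)
    also have "\<dots> \<in> W"
      by (intro scaled_mem disjI2 transpose_components_mem(1)[OF W X(1)])
    finally show ?thesis .
  qed
  have K: "mat2 0 1 (-1) 0 \<in> W" if ?k
  proof -
    obtain X where X: "X \<in> W" "X$1$2 - X$2$1 \<noteq> 0"
      using \<open>?k\<close> by auto
    have "mat2 0 1 (-1) 0 = msmult (1 / (X$1$2 - X$2$1)) (mat2 0 (X$1$2 - X$2$1) (X$2$1 - X$1$2) 0)"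
      using X(2) by (simp add: mat2_simps field_simps)
    also have "\<dots> \<in> W"
      by (intro scaled_mem disjI2 transpose_components_mem(2)[OF W X(1)])
    finally show ?thesis .
  qed
  have HF: "mat2 1 0 0 (-1) \<in> W \<and> mat2 0 1 1 0 \<in> W" if ?p
  proof -
    obtain X where X: "X \<in> W" "X$1$1 - X$2$2 \<noteq> 0 \<or> X$1$2 + X$2$1 \<noteq> 0"
      using \<open>?p\<close> by auto
    show ?thesis
      using traceless_symmetric_basis_mem[OF W transpose_components_mem(3)[OF W X(1)] X(2)] by blast
  qed
  show "zkp_space ?z ?k ?p \<subseteq> W"
  proof
    fix X :: "'a m2"
    assume X: "X \<in> zkp_space ?z ?k ?p"
    have "X = msmult ((X$1$1 + X$2$2) / 2) (mat2 1 0 0 1) + msmult ((X$1$2 - X$2$1) / 2) (mat2 0 1 (-1) 0)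
        + (msmult ((X$1$1 - X$2$2) / 2) (mat2 1 0 0 (-1)) + msmult ((X$1$2 + X$2$1) / 2) (mat2 0 1 1 0))"
      by (simp add: mat2_simps field_simps)
    also have "\<dots> \<in> W"
      using X I K HF unfolding zkp_space_def
      by (intro m2.subspace_add[OF W(1)] scaled_mem) auto
    finally show "X \<in> W" .
  qed
qed

lemma star_invariant_transpose_mem_candidate_spaces:
  fixes W :: "'a::linordered_field m2 set"
  assumes "m2.subspace W" "star_invariant transpose W"
  shows "W \<in> candidate_spaces transpose"
  by (subst star_invariant_transpose_eq_zkp_space[OF assms]) (rule zkp_space_mem_candidate_spaces)

lemma skew_els_symplectic: "skew_els symplectic = {X :: 'a::field m2. X$1$1 + X$2$2 = 0}"
  by (auto simp: skew_els_def symplectic_def m2_entry_simps add.commute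
      simp flip: eq_neg_iff_add_eq_0)

lemma traceless_subset_if_non_scalar_mem:
  fixes W :: "'a::field m2 set"
  assumes W: "m2.subspace W" "star_invariant symplectic W" "graded W"
    and X: "X \<in> W" "X \<notin> central_els"
  shows "{X. X$1$1 + X$2$2 = 0} \<subseteq> W"
proof -
  let ?T = "mat2 1 1 0 1 :: 'a m2" and ?T' = "mat2 1 (-1) 0 1 :: 'a m2"
  let ?L = "mat2 1 0 1 1 :: 'a m2" and ?L' = "mat2 1 0 (-1) 1 :: 'a m2"
  let ?S = "mat2 0 1 1 0 :: 'a m2"
  have conj_T: "?T ** A ** ?T' \<in> W" if "A \<in> W" for A
    by (rule star_invariant_conj[OF W(2) _ _ _ that]) (simp_all add: mat2_simps symplectic_def)
  have conj_L: "?L ** A ** ?L' \<in> W" if "A \<in> W" for A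
    by (rule star_invariant_conj[OF W(2) _ _ _ that]) (simp_all add: mat2_simps symplectic_def)
  have conj_S: "?S ** A ** ?S \<in> W" if "A \<in> W" for A
    by (rule star_invariant_conj[OF W(2) _ _ _ that]) (simp_all add: mat2_simps symplectic_def)
  have proj: "grade_proj k X \<in> W" for k
    using W(3) X(1) unfolding graded_def by blast
  have E12: "mat2 0 1 0 0 \<in> W"
  proof -
    consider "X$1$2 \<noteq> 0" | "X$2$1 \<noteq> 0" | "X$1$1 \<noteq> X$2$2"
      using X(2) by (auto simp: central_els_eq)
    then show ?thesis
    proof cases
      case 1
      then have "mat2 0 1 0 0 = msmult (1 / X$1$2) (grade_proj 1 X)"
        by (simp add: grade_proj_def mat2_simps)
      then show ?thesis
        using m2.subspace_scale[OF W(1) proj] by simp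
    next
      case 2
      then have "mat2 0 1 0 0 = ?S ** msmult (1 / X$2$1) (grade_proj (-1) X) ** ?S"
        by (simp add: grade_proj_def mat2_simps)
      then show ?thesis
        using conj_S[OF m2.subspace_scale[OF W(1) proj]] by simp
    next
      case 3
      \<comment> \<open>\<open>D - T D T\<inverse> = (d\<^sub>1\<^sub>1 - d\<^sub>2\<^sub>2) e\<^sub>1\<^sub>2\<close> for diagonal \<open>D\<close>.\<close>
      then have "mat2 0 1 0 0 = msmult (1 / (X$1$1 - X$2$2))
          (grade_proj 0 X - ?T ** grade_proj 0 X ** ?T')"
        by (simp add: grade_proj_def mat2_simps)
      then show ?thesis
        using m2.subspace_scale[OF W(1) m2.subspace_diff[OF W(1) proj conj_T[OF proj]]] by simp
    qed
  qed
  have "?S ** mat2 0 1 0 0 ** ?S = mat2 0 0 1 0"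
    by (simp add: mat2_simps)
  then have E21: "mat2 0 0 1 0 \<in> W"
    using conj_S[OF E12] by simp
  have "mat2 0 1 0 0 - mat2 0 0 1 0 - ?L ** mat2 0 1 0 0 ** ?L' = mat2 1 0 0 (-1)"
    by (simp add: mat2_simps)
  then have H: "mat2 1 0 0 (-1) \<in> W"
    using m2.subspace_diff[OF W(1) m2.subspace_diff[OF W(1) E12 E21] conj_L[OF E12]] by simp
  show ?thesis
  proof
    fix M :: "'a m2"
    assume "M \<in> {X. X$1$1 + X$2$2 = 0}"
    then have "M = msmult (M$1$1) (mat2 1 0 0 (-1)) + msmult (M$1$2) (mat2 0 1 0 0)
        + msmult (M$2$1) (mat2 0 0 1 0)"
      by (simp add: mat2_simps flip: eq_neg_iff_add_eq_0)
    also have "\<dots> \<in> W"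
      by (intro m2.subspace_add[OF W(1)] m2.subspace_scale[OF W(1)] H E12 E21)
    finally show "M \<in> W" .
  qed
qed

lemma star_invariant_graded_symplectic_mem_candidate_spaces:
  fixes W :: "'a::field m2 set"
  assumes W: "m2.subspace W" "star_invariant symplectic W" "graded W"
  shows "W \<in> candidate_spaces symplectic"
proof -
  have "W = {0} \<or> W = central_els \<or> W = skew_els symplectic \<or> W = UNIV"
  proof (cases "W \<subseteq> central_els")
    case True
    show ?thesis
    proof (cases "W = {0}")
      case False
      then obtain X where X: "X \<in> W" "X \<noteq> 0"
        using m2.subspace_0[OF W(1)] by blast
      with True obtain a where a: "X = mat a"
        by (auto simp: central_els_def)
      with X(2) have "a \<noteq> 0"
        by auto
      have "mat t \<in> W" for t
      proof -
        have "mat t = msmult (t / a) X"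
          using a \<open>a \<noteq> 0\<close> by (simp add: m2_entry_simps)
        then show ?thesis
          using m2.subspace_scale[OF W(1) X(1)] by simp
      qed
      with True have "W = central_els"
        by (auto simp: central_els_def)
      then show ?thesis by blast
    qed blast
  next
    case False
    then obtain X where "X \<in> W" "X \<notin> central_els"
      by blast
    from traceless_subset_if_non_scalar_mem[OF W this]
    have traceless: "skew_els symplectic \<subseteq> W"
      by (simp add: skew_els_symplectic)
    show ?thesis
    proof (cases "W \<subseteq> skew_els symplectic")
      case False
      then obtain Y where Y: "Y \<in> W" "Y$1$1 + Y$2$2 \<noteq> 0"
        by (auto simp: skew_els_symplectic)
      have "M \<in> W" for M
      proof -
        define t where "t = (M$1$1 + M$2$2) / (Y$1$1 + Y$2$2)"
        have "M - msmult t Y \<in> skew_els symplectic"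
          using Y(2) by (simp add: skew_els_symplectic t_def m2_entry_simps field_simps)
        then have "(M - msmult t Y) + msmult t Y \<in> W"
          using traceless by (intro m2.subspace_add[OF W(1)] m2.subspace_scale[OF W(1)] Y(1)) auto
        then show ?thesis
          by simp
      qed
      then show ?thesis by blast
    qed (use traceless in blast)
  qed
  then show ?thesis
    by (auto simp: candidate_spaces_def)
qed

theorem mainTheorem3:
  shows "(\<forall>(n::nat) (Y::nat set) (c::(nat \<Rightarrow> nat) \<Rightarrow> real).
            lspan (star_image transpose n Y c) \<in> candidate_spaces transpose)
       \<and> (\<forall>(n::nat) (Y::nat set) (c::(nat \<Rightarrow> nat) \<Rightarrow> 'a::field).
            lspan (star_image symplectic n Y c) \<in> candidate_spaces symplectic)"
proof (intro conjI allI)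
  fix n Y and c :: "(nat \<Rightarrow> nat) \<Rightarrow> real"
  show "lspan (star_image transpose n Y c) \<in> candidate_spaces transpose"
    by (intro star_invariant_transpose_mem_candidate_spaces subspace_lspan
        star_invariant_lspan_star_image)
next
  fix n Y and c :: "(nat \<Rightarrow> nat) \<Rightarrow> 'a"
  show "lspan (star_image symplectic n Y c) \<in> candidate_spaces symplectic"
    by (intro star_invariant_graded_symplectic_mem_candidate_spaces subspace_lspan
        star_invariant_lspan_star_image graded_lspan_star_image symplectic_grade_proj)
qed

end
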